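(* Let $F$ be a finite family of seeds, $i\ge1$, $m\ge1$ and $0\le k\le im$ integers. If the $i$-regular expansion $i\otimes F$ solves the $(im,k)$-problem, then $F$ solves the $(im,k)$-problem and $F$ solves the $(m,\lfloor k/i\rfloor)$-problem.
   Context: A seed is a finite set $Q=\{p_1<\dots<p_d\}$ of nonnegative integers with $p_1=0$; its span is $p_d+1$. An $(m,k)$-similarity is a binary word of length $m$ with exactly $k$ zeros. $Q$ matches a binary word $w$ at position $j$ ($1\le j\le |w|-p_d$) if $w[j+p_t]=1$ for all $t$; $Q$ detects $w$ if it matches at some position. A family $F$ solves the $(m,k)$-problem if every $(m,k)$-similarity is detected by at least one seed of $F$. The $i$-regular expansion is $i\otimes Q=\{ip_1,\dots,ip_d\}$ and $i\otimes F=\{i\otimes Q:Q\in F\}$. *)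

theory Defs
  imports Main
begin

text \<open>A seed is a finite set of naturals containing 0 (its least element is 0).
  Binary words are bool lists (True = 1, False = 0), indexed from 0.\<close>

definition is_seed :: "nat set \<Rightarrow> bool" where
  "is_seed Q \<longleftrightarrow> finite Q \<and> Q \<noteq> {} \<and> 0 \<in> Q"

definition span :: "nat set \<Rightarrow> nat" where
  "span Q = Max Q + 1"

definition similarity :: "nat \<Rightarrow> nat \<Rightarrow> bool list \<Rightarrow> bool" where
  "similarity m k w \<longleftrightarrow> length w = m \<and> length (filter Not w) = k"

definition matches_at :: "nat set \<Rightarrow> bool list \<Rightarrow> nat \<Rightarrow> bool" where
  "matches_at Q w j \<longleftrightarrow> j + Max Q < length w \<and> (\<forall>p\<in>Q. w ! (j + p))"

definition detects :: "nat set \<Rightarrow> bool list \<Rightarrow> bool" where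
  "detects Q w \<longleftrightarrow> (\<exists>j. matches_at Q w j)"

definition solves :: "nat set set \<Rightarrow> nat \<Rightarrow> nat \<Rightarrow> bool" where
  "solves F m k \<longleftrightarrow> (\<forall>w. similarity m k w \<longrightarrow> (\<exists>Q\<in>F. detects Q w))"

definition reg_exp :: "nat \<Rightarrow> nat set \<Rightarrow> nat set" where
  "reg_exp i Q = (\<lambda>p. i * p) ` Q"

definition reg_exp_family :: "nat \<Rightarrow> nat set set \<Rightarrow> nat set set" where
  "reg_exp_family i F = reg_exp i ` F"

end

theory Submission
  imports Defs
begin

(* Read a word of length i*m as i interleaved phases: phase r consists of the
   letters at positions r, i + r, 2i + r, ...  The expansion i \<otimes> Q can only match such a
   word at position j along one phase: then Q matches phase (j mod i) at position (j div i).
   Conversely, i words f 0, ..., f (i - 1) of length m can be woven into one word of length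
   i*m whose phase r is f r, and the weave has as many zeros as the f r together.
   Hence, if i \<otimes> F solves the (im,k)-problem, then of any i words of length m with k zeros
   in total some seed of F detects one (lemma expansion_detects_component).  Both claims
   follow by a suitable choice of these words:
   (1) for an (im,k)-similarity w, the i consecutive blocks of w of length m;
   (2) for an (m, k div i)-similarity v, k mod i copies of v in which one 1 is turned into
       a 0, and i - k mod i plain copies of v.
   In both cases a match in one of the chosen words yields a match in the original word. *)

definition zeros :: "bool list \<Rightarrow> nat" where
  "zeros w = length (filter Not w)"

lemma similarity_iff_zeros: "similarity m k w \<longleftrightarrow> length w = m \<and> zeros w = k"
  by (simp add: similarity_def zeros_def)

lemma zeros_as_sum: "zeros w = (\<Sum>t<length w. if w ! t then 0 else 1)"
  by (induction w) (simp_all add: zeros_def sum.lessThan_Suc_shift del: sum.lessThan_Suc)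

lemma zeros_update_False:
  assumes "t < length v" and "v ! t"
  shows "zeros (v[t := False]) = zeros v + 1"
proof -
  have "(\<Sum>x<length v. if v[t := False] ! x then 0 else 1 :: nat)
      = (\<Sum>x<length v. (if v ! x then 0 else 1) + (if x = t then 1 else 0))"
    using assms by (intro sum.cong) (auto simp: nth_list_update)
  then show ?thesis
    using assms(1) by (simp add: zeros_as_sum sum.distrib)
qed

lemma sum_lessThan_mult_blocks:
  fixes g :: "nat \<Rightarrow> 'a::comm_monoid_add"
  shows "sum g {..<n * k} = (\<Sum>a<n. \<Sum>t<k. g (a * k + t))"
proof -
  have "sum g {a * k..<a * k + k} = (\<Sum>t<k. g (a * k + t))" for a
    using sum.shift_bounds_nat_ivl[of g 0 "a * k" k] by (simp add: lessThan_atLeast0 add.commute)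
  then show ?thesis
    by (simp flip: sum.nat_group)
qed

lemma array_index_less:
  fixes t r i m :: nat
  assumes "r < i" and "t < m"
  shows "t * i + r < i * m"
proof -
  have "t * i + r < (t + 1) * i" using assms(1) by simp
  also have "\<dots> \<le> m * i" using assms(2) by (intro mult_le_mono1) simp
  finally show ?thesis by (simp add: mult.commute)
qed

definition phase :: "nat \<Rightarrow> nat \<Rightarrow> bool list \<Rightarrow> nat \<Rightarrow> bool list" where
  "phase i m w r = map (\<lambda>t. w ! (t * i + r)) [0..<m]"

definition weave :: "nat \<Rightarrow> nat \<Rightarrow> (nat \<Rightarrow> bool list) \<Rightarrow> bool list" where
  "weave i m f = map (\<lambda>x. f (x mod i) ! (x div i)) [0..<i * m]"

definition block :: "nat \<Rightarrow> bool list \<Rightarrow> nat \<Rightarrow> bool list" where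
  "block m w r = map (\<lambda>t. w ! (r * m + t)) [0..<m]"

lemma length_weave [simp]: "length (weave i m f) = i * m"
  by (simp add: weave_def)

lemma phase_weave:
  assumes "r < i" and "\<And>r. r < i \<Longrightarrow> length (f r) = m"
  shows "phase i m (weave i m f) r = f r"
  using assms by (intro nth_equalityI) (simp_all add: phase_def weave_def array_index_less)

lemma zeros_weave:
  assumes "\<And>r. r < i \<Longrightarrow> length (f r) = m"
  shows "zeros (weave i m f) = (\<Sum>r<i. zeros (f r))"
proof -
  have "zeros (weave i m f) = (\<Sum>x<m * i. if weave i m f ! x then 0 else 1)"
    by (simp add: zeros_as_sum mult.commute)
  also have "\<dots> = (\<Sum>t<m. \<Sum>r<i. if f r ! t then 0 else 1)"
    by (simp add: sum_lessThan_mult_blocks weave_def array_index_less)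
  also have "\<dots> = (\<Sum>r<i. zeros (f r))"
    using assms by (simp add: sum.swap[of _ "{..<m}"] zeros_as_sum)
  finally show ?thesis .
qed

lemma zeros_blocks:
  assumes "length w = i * m"
  shows "zeros w = (\<Sum>r<i. zeros (block m w r))"
  using assms by (simp add: zeros_as_sum sum_lessThan_mult_blocks block_def)

lemma expansion_matches_phase:
  assumes "is_seed Q" and "0 < i" and "length w = i * m"
    and "matches_at (reg_exp i Q) w j"
  shows "matches_at Q (phase i m w (j mod i)) (j div i)"
proof -
  have Max_exp: "Max (reg_exp i Q) = i * Max Q"
    using assms(1) unfolding reg_exp_def is_seed_def
    by (intro mono_Max_commute[symmetric]) (auto simp: mono_def)
  have j_split: "j = j div i * i + j mod i" by simp
  have "(j div i + Max Q) * i \<le> j + i * Max Q"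
    by (subst (2) j_split) (simp add: algebra_simps)
  also have "\<dots> < m * i"
    using assms(3,4) Max_exp by (simp add: matches_at_def mult.commute)
  finally have in_range: "j div i + Max Q < m"
    by (meson mult_less_cancel2)
  have "j div i + p < m \<and> w ! ((j div i + p) * i + j mod i)" if "p \<in> Q" for p
  proof
    have "p \<le> Max Q"
      using assms(1) that by (simp add: is_seed_def)
    then show "j div i + p < m"
      using in_range by simp
    have "(j div i + p) * i + j mod i = j + i * p"
      by (subst (3) j_split) (simp add: algebra_simps)
    then show "w ! ((j div i + p) * i + j mod i)"
      using assms(4) that by (auto simp: matches_at_def reg_exp_def)
  qed
  then show ?thesis
    using in_range by (simp add: matches_at_def phase_def)
qed

lemma matches_at_transfer:
  assumes "finite Q" and "matches_at Q u j" and "a + length u \<le> length w"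
    and "\<And>t. t < length u \<Longrightarrow> u ! t \<Longrightarrow> w ! (a + t)"
  shows "matches_at Q w (a + j)"
proof -
  have u_match: "j + Max Q < length u" "\<And>p. p \<in> Q \<Longrightarrow> u ! (j + p)"
    using assms(2) by (auto simp: matches_at_def)
  have "j + p < length u" if "p \<in> Q" for p
    using u_match(1) Max_ge[OF assms(1) that] by linarith
  then have "w ! (a + j + p)" if "p \<in> Q" for p
    using assms(4) u_match(2) that by (simp add: add.assoc)
  then show ?thesis
    using u_match(1) assms(3) by (simp add: matches_at_def)
qed

(* Central reduction: if i \<otimes> F solves the (im,k)-problem, then of any i words of length m
   with k zeros in total, one is detected by a seed of F (apply the hypothesis to their weave). *)
lemma expansion_detects_component:
  assumes seeds: "\<forall>Q\<in>F. is_seed Q" and "0 < i"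
    and solves: "solves (reg_exp_family i F) (i * m) k"
    and lengths: "\<And>r. r < i \<Longrightarrow> length (f r) = m"
    and total_zeros: "(\<Sum>r<i. zeros (f r)) = k"
  shows "\<exists>r<i. \<exists>Q\<in>F. detects Q (f r)"
proof -
  have "similarity (i * m) k (weave i m f)"
    using lengths total_zeros by (simp add: similarity_iff_zeros zeros_weave)
  then obtain Q j where "Q \<in> F" and "matches_at (reg_exp i Q) (weave i m f) j"
    using solves by (auto simp: solves_def reg_exp_family_def detects_def)
  then have "matches_at Q (f (j mod i)) (j div i)"
    using expansion_matches_phase[of Q i "weave i m f" m j] phase_weave[of "j mod i" i f m]
      seeds lengths \<open>0 < i\<close> by simp
  then show ?thesis
    using \<open>Q \<in> F\<close> \<open>0 < i\<close> unfolding detects_def by (meson mod_less_divisor)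
qed

(* Claim (1): weave the i blocks of an (im,k)-similarity back together. *)
lemma expansion_solves_same_problem:
  assumes seeds: "\<forall>Q\<in>F. is_seed Q" and "0 < i"
    and solves: "solves (reg_exp_family i F) (i * m) k"
  shows "solves F (i * m) k"
  unfolding solves_def
proof (intro allI impI)
  fix w assume "similarity (i * m) k w"
  then have len: "length w = i * m" and "zeros w = k"
    by (simp_all add: similarity_iff_zeros)
  then have total_zeros: "(\<Sum>r<i. zeros (block m w r)) = k"
    by (simp add: zeros_blocks)
  have block_length: "length (block m w r) = m" if "r < i" for r
    by (simp add: block_def)
  obtain r Q where "r < i" "Q \<in> F" and "detects Q (block m w r)"
    using expansion_detects_component[OF seeds \<open>0 < i\<close> solves block_length total_zeros]
    by blast
  then obtain j where match: "matches_at Q (block m w r) j"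
    by (auto simp: detects_def)
  have "r * m + m \<le> length w"
    using mult_le_mono1[of "Suc r" i m] \<open>r < i\<close> len by simp
  then have "matches_at Q w (r * m + j)"
    using seeds \<open>Q \<in> F\<close> by (intro matches_at_transfer[OF _ match]) (simp_all add: is_seed_def block_def)
  then show "\<exists>Q\<in>F. detects Q w"
    using \<open>Q \<in> F\<close> by (auto simp: detects_def)
qed

lemma exists_one_if_zeros_less:
  assumes "zeros v < length v"
  obtains t where "t < length v" and "v ! t"
proof -
  have "\<not> (\<forall>x\<in>set v. \<not> x)"
  proof
    assume "\<forall>x\<in>set v. \<not> x"
    then have "zeros v = length v"
      by (simp add: zeros_def)
    with assms show False
      by simp
  qed
  then show ?thesis
    using that by (auto simp: in_set_conv_nth)
qed

(* Claim (2): weave k mod i copies of v with one extra zero and the remaining plain copies. *)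
lemma expansion_solves_contracted_problem:
  assumes seeds: "\<forall>Q\<in>F. is_seed Q" and "0 < i" and "k \<le> i * m"
    and solves: "solves (reg_exp_family i F) (i * m) k"
  shows "solves F m (k div i)"
  unfolding solves_def
proof (intro allI impI)
  fix v assume "similarity m (k div i) v"
  then have len: "length v = m" and zeros_v: "zeros v = k div i"
    by (simp_all add: similarity_iff_zeros)
  obtain v' where len': "length v' = m" and below_v: "\<And>t. t < m \<Longrightarrow> v' ! t \<Longrightarrow> v ! t"
    and zeros_v': "0 < k mod i \<Longrightarrow> zeros v' = k div i + 1"
  proof (cases "k mod i = 0")
    case True
    then show ?thesis using that[of v] len by simp
  next
    case False
    have "k div i * i < i * m"
      using \<open>k \<le> i * m\<close> False div_mult_mod_eq[of k i] by linarith
    then have "zeros v < length v"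
      using len zeros_v by (metis mult.commute mult_less_cancel2)
    then obtain t where "t < length v" and "v ! t"
      by (rule exists_one_if_zeros_less)
    show ?thesis
    proof (rule that)
      show "length (v[t := False]) = m"
        using len by simp
      show "v ! x" if "x < m" and "v[t := False] ! x" for x
        using that \<open>t < length v\<close> by (cases "x = t") simp_all
      show "zeros (v[t := False]) = k div i + 1"
        using zeros_update_False[OF \<open>t < length v\<close> \<open>v ! t\<close>] zeros_v by simp
    qed
  qed
  define f where "f r = (if r < k mod i then v' else v)" for r
  have "(\<Sum>r<i. zeros (f r)) = (\<Sum>r<i. k div i + (if r < k mod i then 1 else 0))"
    using zeros_v zeros_v' by (intro sum.cong) (auto simp: f_def)
  also have "\<dots> = i * (k div i) + card ({..<i} \<inter> {r. r < k mod i})"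
    by (simp add: sum.distrib sum.If_cases)
  also have "\<dots> = k"
  proof -
    have "{..<i} \<inter> {r. r < k mod i} = {..<k mod i}"
      using mod_less_divisor[OF \<open>0 < i\<close>, of k] by auto
    then show ?thesis
      by simp
  qed
  finally have total_zeros: "(\<Sum>r<i. zeros (f r)) = k" .
  have lengths: "length (f r) = m" if "r < i" for r
    using len len' by (simp add: f_def)
  obtain r Q where "r < i" "Q \<in> F" and "detects Q (f r)"
    using expansion_detects_component[OF seeds \<open>0 < i\<close> solves lengths total_zeros] by blast
  then obtain j where match: "matches_at Q (f r) j"
    by (auto simp: detects_def)
  have "v ! t" if "t < length (f r)" and "f r ! t" for t
    using that below_v len len' by (auto simp: f_def split: if_splits)
  then have "matches_at Q v (0 + j)"
    using seeds \<open>Q \<in> F\<close> lengths[OF \<open>r < i\<close>] len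
    by (intro matches_at_transfer[OF _ match]) (auto simp: is_seed_def)
  then show "\<exists>Q\<in>F. detects Q v"
    using \<open>Q \<in> F\<close> by (auto simp: detects_def)
qed

theorem mainTheorem5:
  fixes F :: "nat set set" and i m k :: nat
  assumes "finite F" and "\<forall>Q\<in>F. is_seed Q"
    and "i \<ge> 1" and "m \<ge> 1" and "k \<le> i * m"
    and "solves (reg_exp_family i F) (i * m) k"
  shows "solves F (i * m) k \<and> solves F m (k div i)"
proof -
  have pos: "0 < i"
    using \<open>i \<ge> 1\<close> by simp
  show ?thesis
    using expansion_solves_same_problem[OF assms(2) pos assms(6)]
      expansion_solves_contracted_problem[OF assms(2) pos assms(5,6)] by simp
qed

end
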